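(* Let $x_1,\dots,x_n\in\mathbb{R}^2$ satisfy $x_i\prec x_j$ whenever $i<j$, let $E=\{x_1,\dots,x_n\}$ and $2\le p\le n$. Then the optimal value of the Max-Min $p$-dispersion problem in $E$ equals $$\max_{1\le i_1<\dots<i_p\le n}\ \min_{j\in\{1,\dots,p-1\}}d_{i_j,i_{j+1}},$$ and the optimal value of the Max-Sum-Min $p$-dispersion problem in $E$ equals $$\max_{1\le i_1<\dots<i_p\le n}\ \sum_{j=1}^{p}m_j,\quad\text{where } m_1=d_{i_1,i_2},\ m_p=d_{i_{p-1},i_p},\ m_j=\min(d_{i_j,i_{j+1}},d_{i_j,i_{j-1}})\text{ for }1<j<p.$$
   Context: For $y=(y^1,y^2),z=(z^1,z^2)\in\mathbb{R}^2$ write $y\prec z$ iff $y^1<z^1$ and $y^2>z^2$. Fix $\alpha>0$, let $d$ be the Euclidean distance, and set $d_{ij}=d(x_i,x_j)^\alpha$. Let $D_p$ be the set of $p$-tuples $(z_1,\dots,z_p)\in E^p$ of pairwise distinct points. The Max-Min $p$-dispersion problem is $\max_{(z_1,\dots,z_p)\in D_p}\min_{1\le i<j\le p}d(z_i,z_j)^\alpha$; the Max-Sum-Min $p$-dispersion problem is $\max_{(z_1,\dots,z_p)\in D_p}\sum_{i=1}^{p}\min_{j\ne i}d(z_i,z_j)^\alpha$. *)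

theory Defs
  imports "HOL-Analysis.Analysis"
begin

text \<open>Points of the plane are modelled as real \<times> real; the product metric
  on real \<times> real is the Euclidean distance.\<close>

definition prec :: "real \<times> real \<Rightarrow> real \<times> real \<Rightarrow> bool" (infix "\<prec>" 50) where
  "y \<prec> z \<longleftrightarrow> fst y < fst z \<and> snd y > snd z"

definition Dp :: "(real \<times> real) set \<Rightarrow> nat \<Rightarrow> (real \<times> real) list set" where
  "Dp E p = {z. length z = p \<and> distinct z \<and> set z \<subseteq> E}"

definition maxmin_obj :: "real \<Rightarrow> nat \<Rightarrow> (real \<times> real) list \<Rightarrow> real" where
  "maxmin_obj \<alpha> p z = Min {dist (z ! i) (z ! j) powr \<alpha> | i j. i < j \<and> j < p}"

definition maxsummin_obj :: "real \<Rightarrow> nat \<Rightarrow> (real \<times> real) list \<Rightarrow> real" where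
  "maxsummin_obj \<alpha> p z = (\<Sum>i<p. Min {dist (z ! i) (z ! j) powr \<alpha> | j. j < p \<and> j \<noteq> i})"

definition maxmin_opt :: "(real \<times> real) set \<Rightarrow> real \<Rightarrow> nat \<Rightarrow> real" where
  "maxmin_opt E \<alpha> p = Max (maxmin_obj \<alpha> p ` Dp E p)"

definition maxsummin_opt :: "(real \<times> real) set \<Rightarrow> real \<Rightarrow> nat \<Rightarrow> real" where
  "maxsummin_opt E \<alpha> p = Max (maxsummin_obj \<alpha> p ` Dp E p)"

definition idx_seqs :: "nat \<Rightarrow> nat \<Rightarrow> nat list set" where
  "idx_seqs n p = {is. length is = p \<and> sorted_wrt (<) is \<and> set is \<subseteq> {1..n}}"

end

theory Submission
  imports Defs
begin

text \<open>Along a \<prec>-chain both coordinates are monotone, so of three chained points the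
  outer two are the farthest apart. Hence, for points listed in chain order, the closest
  pair is a consecutive pair and the nearest neighbour of a point is one of its neighbours
  in the list. Both objectives depend only on the set of chosen points, and every
  p-subset of E is listed in chain order by exactly one increasing index sequence; so
  both optima are maxima over index sequences of the consecutive-distance formulas.\<close>

lemma prec_dist_le:
  fixes a b c :: "real \<times> real"
  assumes "a \<prec> b" "b \<prec> c"
  shows "dist a b \<le> dist a c \<and> dist b c \<le> dist a c"
  using assms unfolding prec_def dist_prod_def dist_real_def
  by (auto intro!: real_sqrt_le_mono add_mono power_mono)

lemma sorted_prec_dist_powr_mono:
  fixes z :: "(real \<times> real) list"
  assumes "sorted_wrt (\<prec>) z" "0 \<le> \<alpha>" "k < length z"
  shows "i < j \<Longrightarrow> j \<le> k \<Longrightarrow> dist (z ! i) (z ! j) powr \<alpha> \<le> dist (z ! i) (z ! k) powr \<alpha>"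
    and "i \<le> j \<Longrightarrow> j < k \<Longrightarrow> dist (z ! k) (z ! j) powr \<alpha> \<le> dist (z ! k) (z ! i) powr \<alpha>"
proof -
  have prec: "z ! a \<prec> z ! b" if "a < b" "b \<le> k" for a b
    using assms that by (auto simp: sorted_wrt_iff_nth_less)
  show "dist (z ! i) (z ! j) powr \<alpha> \<le> dist (z ! i) (z ! k) powr \<alpha>" if "i < j" "j \<le> k"
  proof (cases "j = k")
    case False
    then have "dist (z ! i) (z ! j) \<le> dist (z ! i) (z ! k)"
      using prec_dist_le[of "z ! i" "z ! j" "z ! k"] prec that by simp
    then show ?thesis using assms(2) by (simp add: powr_mono2)
  qed simp
  show "dist (z ! k) (z ! j) powr \<alpha> \<le> dist (z ! k) (z ! i) powr \<alpha>" if "i \<le> j" "j < k"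
  proof (cases "i = j")
    case False
    then have "dist (z ! j) (z ! k) \<le> dist (z ! i) (z ! k)"
      using prec_dist_le[of "z ! i" "z ! j" "z ! k"] prec that by simp
    then show ?thesis using assms(2) by (simp add: powr_mono2 dist_commute)
  qed simp
qed

lemma Min_pairs_eq_Min_consecutive:
  fixes D :: "nat \<Rightarrow> nat \<Rightarrow> 'a::linorder"
  assumes "2 \<le> p" and nearest: "\<And>i j. i < j \<Longrightarrow> j < p \<Longrightarrow> D i (i + 1) \<le> D i j"
  shows "Min {D i j | i j. i < j \<and> j < p} = Min ((\<lambda>i. D i (i + 1)) ` {0..<p - 1})"
    (is "Min ?pairs = Min ?consecutive")
proof (rule antisym)
  have "?pairs \<subseteq> case_prod D ` ({..<p} \<times> {..<p})" by force
  then have fin: "finite ?pairs" by (rule finite_subset) simp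
  have sub: "?consecutive \<subseteq> ?pairs" by force
  have ne: "?consecutive \<noteq> {}" using assms(1) by simp
  show "Min ?pairs \<le> Min ?consecutive" using Min_antimono[OF sub ne fin] .
  have "Min ?pairs \<in> ?pairs" using fin sub ne by (intro Min_in) auto
  then obtain i j where ij: "Min ?pairs = D i j" "i < j" "j < p" by blast
  have "Min ?consecutive \<le> D i (i + 1)" using ij by (intro Min_le) auto
  also have "\<dots> \<le> D i j" using nearest ij by blast
  finally show "Min ?consecutive \<le> Min ?pairs" using ij by simp
qed

text \<open>The paper's m_j, with positions counted from 0.\<close>
definition adjacent_min :: "(nat \<Rightarrow> nat \<Rightarrow> 'a::linorder) \<Rightarrow> nat \<Rightarrow> nat \<Rightarrow> 'a" where
  "adjacent_min D p j =
     (if j = 0 then D 0 1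
      else if j = p - 1 then D (p - 2) (p - 1)
      else min (D j (j + 1)) (D j (j - 1)))"

lemma Min_others_eq_adjacent_min:
  assumes "i < p" "2 \<le> p" and sym: "\<And>a b. D a b = D b a"
    and right: "\<And>j k. i < j \<Longrightarrow> j \<le> k \<Longrightarrow> k < p \<Longrightarrow> D i j \<le> D i k"
    and left: "\<And>j k. k \<le> j \<Longrightarrow> j < i \<Longrightarrow> D i j \<le> D i k"
  shows "Min {D i j | j. j < p \<and> j \<noteq> i} = adjacent_min D p i"
proof (rule Min_eqI)
  show "finite {D i j | j. j < p \<and> j \<noteq> i}" by simp
  have next_le: "adjacent_min D p i \<le> D i (i + 1)" if "i + 1 < p"
    using that sym[of "p - 2" "p - 1"] by (auto simp: adjacent_min_def)
  have prev_le: "adjacent_min D p i \<le> D i (i - 1)" if "0 < i"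
    using that assms(1) sym[of "p - 2" "p - 1"] by (auto simp: adjacent_min_def numeral_2_eq_2)
  fix y assume "y \<in> {D i j | j. j < p \<and> j \<noteq> i}"
  then obtain j where j: "y = D i j" "j < p" "j \<noteq> i" by blast
  show "adjacent_min D p i \<le> y"
  proof (cases "i < j")
    case True
    then show ?thesis using next_le right[where j = "i + 1" and k = j] j by fastforce
  next
    case False
    then show ?thesis using prev_le left[where j = "i - 1" and k = j] j by fastforce
  qed
next
  show "adjacent_min D p i \<in> {D i j | j. j < p \<and> j \<noteq> i}"
    using assms(1,2) sym[of "p - 2" "p - 1"]
    by (auto simp: adjacent_min_def min_def numeral_2_eq_2)
qed

lemma maxmin_obj_sorted_prec:
  fixes z :: "(real \<times> real) list"
  assumes "sorted_wrt (\<prec>) z" "length z = p" "2 \<le> p" "0 \<le> \<alpha>"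
  shows "maxmin_obj \<alpha> p z = Min ((\<lambda>j. dist (z ! j) (z ! (j + 1)) powr \<alpha>) ` {0..<p - 1})"
  unfolding maxmin_obj_def
  by (rule Min_pairs_eq_Min_consecutive[where D = "\<lambda>i j. dist (z ! i) (z ! j) powr \<alpha>"])
    (use assms sorted_prec_dist_powr_mono(1) in auto)

lemma maxsummin_obj_sorted_prec:
  fixes z :: "(real \<times> real) list"
  assumes "sorted_wrt (\<prec>) z" "length z = p" "2 \<le> p" "0 \<le> \<alpha>"
  shows "maxsummin_obj \<alpha> p z = (\<Sum>j<p. adjacent_min (\<lambda>i j. dist (z ! i) (z ! j) powr \<alpha>) p j)"
  unfolding maxsummin_obj_def
proof (intro sum.cong refl Min_others_eq_adjacent_min)
  fix i j k
  assume "i \<in> {..<p}"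
  then show "i < p" by simp
  show "dist (z ! i) (z ! j) powr \<alpha> \<le> dist (z ! i) (z ! k) powr \<alpha>" if "i < j" "j \<le> k" "k < p"
    using sorted_prec_dist_powr_mono(1) assms that by blast
  show "dist (z ! i) (z ! j) powr \<alpha> \<le> dist (z ! i) (z ! k) powr \<alpha>" if "k \<le> j" "j < i"
    using sorted_prec_dist_powr_mono(2) assms that \<open>i < p\<close> by blast
qed (use assms in \<open>auto simp: dist_commute\<close>)

lemma maxmin_obj_eq_Min_dist_set:
  assumes "distinct z" "length z = p"
  shows "maxmin_obj \<alpha> p z = Min {dist a b powr \<alpha> | a b. a \<in> set z \<and> b \<in> set z \<and> a \<noteq> b}"
proof -
  have "{dist (z ! i) (z ! j) powr \<alpha> | i j. i < j \<and> j < length z}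
      = {dist a b powr \<alpha> | a b. a \<in> set z \<and> b \<in> set z \<and> a \<noteq> b}"
  proof (intro equalityI subsetI)
    fix y assume "y \<in> {dist (z ! i) (z ! j) powr \<alpha> | i j. i < j \<and> j < length z}"
    then obtain i j where "y = dist (z ! i) (z ! j) powr \<alpha>" "i < j" "j < length z" by blast
    moreover have "z ! i \<noteq> z ! j" using assms calculation by (simp add: nth_eq_iff_index_eq)
    ultimately show "y \<in> {dist a b powr \<alpha> | a b. a \<in> set z \<and> b \<in> set z \<and> a \<noteq> b}"
      by fastforce
  next
    fix y assume "y \<in> {dist a b powr \<alpha> | a b. a \<in> set z \<and> b \<in> set z \<and> a \<noteq> b}"
    then obtain a b where "y = dist a b powr \<alpha>" "a \<in> set z" "b \<in> set z" "a \<noteq> b"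
      by blast
    then obtain i j where ij: "y = dist (z ! i) (z ! j) powr \<alpha>" "i \<noteq> j" "i < length z" "j < length z"
      by (metis in_set_conv_nth)
    have swap: "y = dist (z ! j) (z ! i) powr \<alpha>" using ij(1) by (simp add: dist_commute)
    consider "i < j" | "j < i" using ij(2) by linarith
    then show "y \<in> {dist (z ! i) (z ! j) powr \<alpha> | i j. i < j \<and> j < length z}"
    proof cases
      case 1
      then show ?thesis using ij by blast
    next
      case 2
      then show ?thesis using ij swap by blast
    qed
  qed
  then show ?thesis unfolding maxmin_obj_def assms(2) [symmetric] by simp
qed

lemma maxsummin_obj_eq_sum_set:
  assumes "distinct z" "length z = p"
  shows "maxsummin_obj \<alpha> p z = (\<Sum>a\<in>set z. Min {dist a b powr \<alpha> | b. b \<in> set z \<and> b \<noteq> a})"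
    (is "_ = sum ?nearest (set z)")
proof -
  have others: "{dist (z ! i) (z ! j) powr \<alpha> | j. j < length z \<and> j \<noteq> i}
      = {dist (z ! i) b powr \<alpha> | b. b \<in> set z \<and> b \<noteq> z ! i}" if "i < length z" for i
  proof (intro equalityI subsetI)
    fix y assume "y \<in> {dist (z ! i) (z ! j) powr \<alpha> | j. j < length z \<and> j \<noteq> i}"
    then obtain j where "y = dist (z ! i) (z ! j) powr \<alpha>" "j < length z" "j \<noteq> i" by blast
    moreover have "z ! j \<noteq> z ! i" using assms that calculation by (simp add: nth_eq_iff_index_eq)
    moreover have "z ! j \<in> set z" using calculation by simp
    ultimately show "y \<in> {dist (z ! i) b powr \<alpha> | b. b \<in> set z \<and> b \<noteq> z ! i}"
      by blast
  next
    fix y assume "y \<in> {dist (z ! i) b powr \<alpha> | b. b \<in> set z \<and> b \<noteq> z ! i}"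
    then obtain b where y: "y = dist (z ! i) b powr \<alpha>" "b \<in> set z" "b \<noteq> z ! i" by blast
    then obtain j where "j < length z" "b = z ! j" using in_set_conv_nth by metis
    with y show "y \<in> {dist (z ! i) (z ! j) powr \<alpha> | j. j < length z \<and> j \<noteq> i}"
      by blast
  qed
  have "maxsummin_obj \<alpha> p z = (\<Sum>i<length z. ?nearest (z ! i))"
    unfolding maxsummin_obj_def assms(2) [symmetric] by (rule sum.cong) (simp_all add: others)
  also have "\<dots> = sum ?nearest (set z)"
    by (rule sum.reindex_bij_betw[OF bij_betw_nth]) (simp_all add: assms(1))
  finally show ?thesis .
qed

lemma inj_on_prec_chain:
  fixes x :: "nat \<Rightarrow> real \<times> real"
  assumes "\<And>i j. 1 \<le> i \<Longrightarrow> i < j \<Longrightarrow> j \<le> n \<Longrightarrow> x i \<prec> x j"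
  shows "inj_on x {1..n}"
proof (rule linorder_inj_onI)
  fix i j assume "i < j" "i \<in> {1..n}" "j \<in> {1..n}"
  then have "x i \<prec> x j" using assms by simp
  then show "x i \<noteq> x j" by (auto simp: prec_def)
qed auto

lemma sorted_prec_map_idx_seq:
  fixes x :: "nat \<Rightarrow> real \<times> real"
  assumes chain: "\<And>i j. 1 \<le> i \<Longrightarrow> i < j \<Longrightarrow> j \<le> n \<Longrightarrow> x i \<prec> x j"
    and "ks \<in> idx_seqs n p"
  shows "sorted_wrt (\<prec>) (map x ks)"
proof -
  have sorted: "sorted_wrt (<) ks" and range: "set ks \<subseteq> {1..n}"
    using assms(2) by (auto simp: idx_seqs_def)
  show ?thesis
    unfolding sorted_wrt_map
  proof (rule sorted_wrt_mono_rel[OF _ sorted])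
    fix i j assume "i \<in> set ks" "j \<in> set ks" "i < j"
    then show "x i \<prec> x j" using range by (intro chain) auto
  qed
qed

lemma map_idx_seq_in_Dp:
  assumes "inj_on x {1..n}" "ks \<in> idx_seqs n p"
  shows "map x ks \<in> Dp (x ` {1..n}) p"
proof -
  have len: "length ks = p" and sorted: "sorted_wrt (<) ks" and range: "set ks \<subseteq> {1..n}"
    using assms(2) by (auto simp: idx_seqs_def)
  have "distinct (map x ks)"
    using sorted inj_on_subset[OF assms(1) range] by (simp add: distinct_map strict_sorted_iff)
  then show ?thesis using len range by (auto simp: Dp_def)
qed

lemma idx_seq_with_same_points:
  assumes "inj_on x {1..n}" "z \<in> Dp (x ` {1..n}) p"
  obtains ks where "ks \<in> idx_seqs n p" "set (map x ks) = set z"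
proof
  let ?I = "{1..n} \<inter> x -` set z"
  have image: "x ` ?I = set z" using assms(2) by (auto simp: Dp_def)
  have "card ?I = card (x ` ?I)"
    using inj_on_subset[OF assms(1) Int_lower1] by (simp add: card_image)
  also have "\<dots> = p" using image assms(2) by (simp add: Dp_def distinct_card)
  finally show "sorted_list_of_set ?I \<in> idx_seqs n p"
    by (auto simp: idx_seqs_def strict_sorted_iff)
  show "set (map x (sorted_list_of_set ?I)) = set z"
    using image by simp
qed

lemma image_Dp_eq_image_idx_seqs:
  assumes inj: "inj_on x {1..n}"
    and set_invariant: "\<And>z z'. z \<in> Dp (x ` {1..n}) p \<Longrightarrow> z' \<in> Dp (x ` {1..n}) p \<Longrightarrow>
      set z = set z' \<Longrightarrow> f z = f z'"
  shows "f ` Dp (x ` {1..n}) p = (\<lambda>ks. f (map x ks)) ` idx_seqs n p"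
proof (intro equalityI image_subsetI)
  fix z assume z: "z \<in> Dp (x ` {1..n}) p"
  then obtain ks where ks: "ks \<in> idx_seqs n p" "set (map x ks) = set z"
    using idx_seq_with_same_points[OF inj] by blast
  then have "f z = f (map x ks)"
    using set_invariant[OF z map_idx_seq_in_Dp[OF inj ks(1)]] by simp
  then show "f z \<in> (\<lambda>ks. f (map x ks)) ` idx_seqs n p" using ks(1) by blast
next
  fix ks assume "ks \<in> idx_seqs n p"
  then show "f (map x ks) \<in> f ` Dp (x ` {1..n}) p" using map_idx_seq_in_Dp[OF inj] by blast
qed

lemma maxmin_obj_idx_seq:
  fixes x :: "nat \<Rightarrow> real \<times> real"
  assumes "\<And>i j. 1 \<le> i \<Longrightarrow> i < j \<Longrightarrow> j \<le> n \<Longrightarrow> x i \<prec> x j"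
    and ks: "ks \<in> idx_seqs n p" and "2 \<le> p" "0 \<le> \<alpha>"
  shows "maxmin_obj \<alpha> p (map x ks)
    = Min ((\<lambda>j. dist (x (ks ! j)) (x (ks ! (j + 1))) powr \<alpha>) ` {0..<p - 1})"
proof -
  have len: "length (map x ks) = p" using ks by (simp add: idx_seqs_def)
  have "maxmin_obj \<alpha> p (map x ks)
    = Min ((\<lambda>j. dist (map x ks ! j) (map x ks ! (j + 1)) powr \<alpha>) ` {0..<p - 1})"
    using sorted_prec_map_idx_seq[OF assms(1,2)] len assms(3,4) by (rule maxmin_obj_sorted_prec)
  also have "\<dots> = Min ((\<lambda>j. dist (x (ks ! j)) (x (ks ! (j + 1))) powr \<alpha>) ` {0..<p - 1})"
    using len by (auto intro!: arg_cong[where f = Min] image_cong)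
  finally show ?thesis .
qed

lemma maxsummin_obj_idx_seq:
  fixes x :: "nat \<Rightarrow> real \<times> real"
  assumes "\<And>i j. 1 \<le> i \<Longrightarrow> i < j \<Longrightarrow> j \<le> n \<Longrightarrow> x i \<prec> x j"
    and ks: "ks \<in> idx_seqs n p" and "2 \<le> p" "0 \<le> \<alpha>"
  shows "maxsummin_obj \<alpha> p (map x ks)
    = (\<Sum>j<p. adjacent_min (\<lambda>a b. dist (x (ks ! a)) (x (ks ! b)) powr \<alpha>) p j)"
proof -
  have len: "length (map x ks) = p" using ks by (simp add: idx_seqs_def)
  have "maxsummin_obj \<alpha> p (map x ks)
    = (\<Sum>j<p. adjacent_min (\<lambda>a b. dist (map x ks ! a) (map x ks ! b) powr \<alpha>) p j)"
    using sorted_prec_map_idx_seq[OF assms(1,2)] len assms(3,4) by (rule maxsummin_obj_sorted_prec)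
  also have "\<dots> = (\<Sum>j<p. adjacent_min (\<lambda>a b. dist (x (ks ! a)) (x (ks ! b)) powr \<alpha>) p j)"
    using len assms(3) by (auto simp: adjacent_min_def intro!: sum.cong)
  finally show ?thesis .
qed

theorem proposition3:
  fixes x :: "nat \<Rightarrow> real \<times> real" and n p :: nat and \<alpha> :: real
  assumes alpha: "\<alpha> > 0"
    and chain: "\<And>i j. 1 \<le> i \<Longrightarrow> i < j \<Longrightarrow> j \<le> n \<Longrightarrow> x i \<prec> x j"
    and p: "2 \<le> p" "p \<le> n"
  defines "E \<equiv> x ` {1..n}"
    and "d \<equiv> (\<lambda>i j. dist (x i) (x j) powr \<alpha>)"
  shows "maxmin_opt E \<alpha> p =
           Max ((\<lambda>is. Min ((\<lambda>j. d (is ! j) (is ! (j + 1))) ` {0..<p - 1})) ` idx_seqs n p)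
       \<and> maxsummin_opt E \<alpha> p =
           Max ((\<lambda>is. \<Sum>j<p.
                   (if j = 0 then d (is ! 0) (is ! 1)
                    else if j = p - 1 then d (is ! (p - 2)) (is ! (p - 1))
                    else min (d (is ! j) (is ! (j + 1))) (d (is ! j) (is ! (j - 1)))))
                ` idx_seqs n p)"
proof -
  have inj: "inj_on x {1..n}" using chain by (rule inj_on_prec_chain)
  have alpha_nonneg: "0 \<le> \<alpha>" using alpha by simp
  have "maxmin_obj \<alpha> p ` Dp E p = (\<lambda>ks. maxmin_obj \<alpha> p (map x ks)) ` idx_seqs n p"
    unfolding E_def using inj
    by (rule image_Dp_eq_image_idx_seqs) (simp add: Dp_def maxmin_obj_eq_Min_dist_set)
  moreover have "maxsummin_obj \<alpha> p ` Dp E p = (\<lambda>ks. maxsummin_obj \<alpha> p (map x ks)) ` idx_seqs n p"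
    unfolding E_def using inj
    by (rule image_Dp_eq_image_idx_seqs) (simp add: Dp_def maxsummin_obj_eq_sum_set)
  ultimately show ?thesis
    unfolding maxmin_opt_def maxsummin_opt_def d_def
    using maxmin_obj_idx_seq[OF chain _ p(1) alpha_nonneg]
      maxsummin_obj_idx_seq[OF chain _ p(1) alpha_nonneg]
    by (simp add: adjacent_min_def cong: image_cong)
qed

end
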